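(* Let $\varrho=\rho_1\otimes\cdots\otimes\rho_n$ be a product state on $\mathcal K=\bigotimes_{i=1}^n\mathcal H_i$ (finite-dimensional Hilbert spaces), let $X$ be an observable on $\mathcal K$, and let $i\in[n]$. Then $$\mathbb E_\varrho[(\mathcal D_iX)^2]=\mathbb E_{\varrho\otimes\varrho}\Big[\tfrac12\big(X\otimes I-F_i(X\otimes I)F_i\big)^2\Big]=\mathbb E_\varrho[X^2]-\mathbb E_{\varrho\otimes\varrho}\big[(X\otimes I)F_i(X\otimes I)F_i\big].$$
   Context: For a state $\tau$ and operator $Y$, $\mathbb E_\tau[Y]=\mathrm{Tr}[\tau Y]$. For $i\in[n]$, $\mathcal E_i$ is the linear map on operators on $\mathcal K$ given by $\mathcal E_iX=\mathrm{Tr}_i[(\rho_i\otimes I)X]$, regarded as an operator on $\mathcal K$ by tensoring with the identity on $\mathcal H_i$ (i.e., on product operators, $\mathcal E_i(Y_1\otimes\cdots\otimes Y_n)=\mathrm{Tr}[\rho_iY_i]\,Y_1\otimes\cdots\otimes I_{\mathcal H_i}\otimes\cdots\otimes Y_n$), and $\mathcal D_iX=X-\mathcal E_iX$. $F_i$ is the swap operator on $\mathcal K\otimes\mathcal K$ exchanging the $i$th tensor component of the first copy of $\mathcal K$ with the $i$th tensor component of the second copy. *)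

theory Defs
  imports "HOL-Analysis.Analysis"
begin

text \<open>Subsystems are indexed by i < n (so [n] = {0..<n}); subsystem i has
dimension d i with standard basis indexed by {..<d i}. A basis vector of
K = H_0 (x) ... (x) H_(n-1) is a multi-index x in Idx d n. Operators on a space with basis
index set S are matrices, i.e. functions S -> S -> complex (values outside S irrelevant).\<close>

type_synonym midx = "nat \<Rightarrow> nat"
type_synonym 'a op = "'a \<Rightarrow> 'a \<Rightarrow> complex"

definition Idx :: "(nat \<Rightarrow> nat) \<Rightarrow> nat \<Rightarrow> midx set" where
  "Idx d n = PiE {..<n} (\<lambda>i. {..<d i})"

definition mmult :: "'a set \<Rightarrow> 'a op \<Rightarrow> 'a op \<Rightarrow> 'a op" where
  "mmult S A B = (\<lambda>x y. \<Sum>z\<in>S. A x z * B z y)"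

definition mtrace :: "'a set \<Rightarrow> 'a op \<Rightarrow> complex" where
  "mtrace S A = (\<Sum>x\<in>S. A x x)"

definition expect :: "'a set \<Rightarrow> 'a op \<Rightarrow> 'a op \<Rightarrow> complex" where
  "expect S tau Y = mtrace S (mmult S tau Y)"

definition hermitian_on :: "'a set \<Rightarrow> 'a op \<Rightarrow> bool" where
  "hermitian_on S A \<longleftrightarrow> (\<forall>x\<in>S. \<forall>y\<in>S. A x y = cnj (A y x))"

definition psd_on :: "'a set \<Rightarrow> 'a op \<Rightarrow> bool" where
  "psd_on S A \<longleftrightarrow> hermitian_on S A \<and>
     (\<forall>v. 0 \<le> Re (\<Sum>x\<in>S. \<Sum>y\<in>S. cnj (v x) * A x y * v y))"

definition density_on :: "'a set \<Rightarrow> 'a op \<Rightarrow> bool" where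
  "density_on S A \<longleftrightarrow> psd_on S A \<and> mtrace S A = 1"

definition prod_state :: "nat \<Rightarrow> (nat \<Rightarrow> nat op) \<Rightarrow> midx op" where
  "prod_state n rho = (\<lambda>x y. \<Prod>i<n. rho i (x i) (y i))"

text \<open>E_i X = Tr_i[(rho_i (x) I) X], tensored with I on H_i.\<close>
definition cond_exp :: "(nat \<Rightarrow> nat) \<Rightarrow> (nat \<Rightarrow> nat op) \<Rightarrow> nat \<Rightarrow> midx op \<Rightarrow> midx op" where
  "cond_exp d rho i X = (\<lambda>x y. if x i = y i then
      (\<Sum>a<d i. \<Sum>c<d i. rho i a c * X (x(i := c)) (y(i := a))) else 0)"

definition diff_op :: "(nat \<Rightarrow> nat) \<Rightarrow> (nat \<Rightarrow> nat op) \<Rightarrow> nat \<Rightarrow> midx op \<Rightarrow> midx op" where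
  "diff_op d rho i X = (\<lambda>x y. X x y - cond_exp d rho i X x y)"

definition tensor_op :: "'a op \<Rightarrow> 'b op \<Rightarrow> ('a \<times> 'b) op" where
  "tensor_op A B = (\<lambda>(x, y) (x', y'). A x x' * B y y')"

definition id_op :: "'a op" where
  "id_op = (\<lambda>x y. if x = y then 1 else 0)"

text \<open>F_i swaps the i-th factor of the first copy of K with the i-th factor of the second.\<close>
definition swap_op :: "nat \<Rightarrow> (midx \<times> midx) op" where
  "swap_op i = (\<lambda>(x, y) (x', y'). if x' = x(i := y i) \<and> y' = y(i := x i) then 1 else 0)"

end

theory Submission
  imports Defs
begin

(* Write E for E_i and <Y> for the expectation of Y in the product state. Because the state
   factors as rho_i (x) (rest), <E Y> = <Y>; because E Q acts trivially on H_i,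
   E(P (E Q)) = (E P)(E Q) and E((E Q) P) = (E Q)(E P). Hence <X (E X)> = <(E X) X> = <(E X)^2>,
   and <(D X)^2> = <X^2> - <X (E X)>. Tracing out the second copy of K turns
   (X (x) I) F (X (x) I) F into X (E X), so <X (E X)> is the last term of the statement.
   Finally F is the permutation matrix of an involution leaving rho (x) rho invariant, so in
   (1/2)(X (x) I - F (X (x) I) F)^2 the two square terms have the same expectation, and so do
   the two cross terms. *)

lemma expect_altdef: "expect S \<tau> M = (\<Sum>x\<in>S. \<Sum>z\<in>S. \<tau> x z * M z x)"
  unfolding expect_def mtrace_def mmult_def by (simp add: sum_distrib_left)

lemma expect_cong:
  "(\<And>x y. x \<in> S \<Longrightarrow> y \<in> S \<Longrightarrow> M x y = N x y) \<Longrightarrow> expect S \<tau> M = expect S \<tau> N"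
  unfolding expect_altdef by (intro sum.cong refl) auto

lemma mmult_tensor_op:
  "mmult (S \<times> T) (tensor_op A B) (tensor_op C D) = tensor_op (mmult S A C) (mmult T B D)"
  unfolding mmult_def tensor_op_def
  by (auto simp: fun_eq_iff sum_product sum.cartesian_product intro!: sum.cong)

lemma expect_tensor_op:
  "expect (S \<times> T) (tensor_op \<sigma> \<tau>) (tensor_op M N) = expect S \<sigma> M * expect T \<tau> N"
  unfolding expect_altdef tensor_op_def
  by (simp add: sum.cartesian_product' sum_product mult_ac)

lemma expect_mmult_id_op: "finite S \<Longrightarrow> expect S \<tau> (mmult S id_op id_op) = mtrace S \<tau>"
  unfolding expect_altdef mmult_def id_op_def mtrace_def
  by (simp add: if_distrib[where f = "\<lambda>u. _ * u"] cong: if_cong)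

lemma expect_tensor_op_partial:
  "expect (S \<times> T) (tensor_op \<sigma> \<tau>) N = expect S \<sigma> (\<lambda>x' x. expect T \<tau> (\<lambda>y' y. N (x', y') (x, y)))"
  unfolding expect_altdef tensor_op_def
  by (simp add: sum.cartesian_product' sum_distrib_left mult_ac sum.swap[of _ T S])

definition perm_op :: "('a \<Rightarrow> 'a) \<Rightarrow> 'a op" where
  "perm_op s = (\<lambda>p q. if q = s p then 1 else 0)"

lemma mmult_perm_op_left:
  "finite S \<Longrightarrow> s p \<in> S \<Longrightarrow> mmult S (perm_op s) M p q = M (s p) q"
  unfolding mmult_def perm_op_def by (simp add: if_distrib[where f = "\<lambda>u. u * _"] cong: if_cong)

lemma mmult_perm_op_right:
  assumes "finite S" "s q \<in> S" "\<And>p. s (s p) = p"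
  shows "mmult S M (perm_op s) p q = M p (s q)"
proof -
  have "(q = s r) = (r = s q)" for r using assms(3) by metis
  then show ?thesis
    unfolding mmult_def perm_op_def using assms(1,2)
    by (simp add: if_distrib[where f = "\<lambda>u. _ * u"] cong: if_cong)
qed

lemma sum_reindex_involution:
  assumes "\<And>p. p \<in> S \<Longrightarrow> s p \<in> S" "\<And>p. s (s p) = p"
  shows "(\<Sum>p\<in>S. g (s p)) = (\<Sum>p\<in>S. g p)"
proof -
  have "bij_betw s S S"
    by (rule bij_betwI[of _ _ _ s]) (use assms in auto)
  then show ?thesis by (rule sum.reindex_bij_betw)
qed

lemma expect_conj_involution:
  assumes "\<And>p. p \<in> S \<Longrightarrow> s p \<in> S" "\<And>p. s (s p) = p"
    and "\<And>p q. p \<in> S \<Longrightarrow> q \<in> S \<Longrightarrow> \<Sigma> (s p) (s q) = \<Sigma> p q"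
  shows "expect S \<Sigma> (\<lambda>q p. N (s q) (s p)) = expect S \<Sigma> N"
proof -
  note reindex = sum_reindex_involution[OF assms(1,2)]
  have "expect S \<Sigma> (\<lambda>q p. N (s q) (s p)) = (\<Sum>x\<in>S. \<Sum>z\<in>S. \<Sigma> (s x) (s z) * N (s z) (s x))"
    unfolding expect_altdef using assms(3) by (intro sum.cong refl) simp
  also have "\<dots> = (\<Sum>x\<in>S. \<Sum>z\<in>S. \<Sigma> (s x) z * N z (s x))"
    by (simp only: reindex[of "\<lambda>z. \<Sigma> (s _) z * N z (s _)"])
  also have "\<dots> = expect S \<Sigma> N"
    unfolding expect_altdef by (rule reindex)
  finally show ?thesis .
qed

lemma expect_half_square_sub_perm_conj:
  fixes S :: "'a set" and M \<Sigma> :: "'a op" and s :: "'a \<Rightarrow> 'a"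
  defines "F \<equiv> perm_op s"
  defines "Z \<equiv> \<lambda>u v. M u v - mmult S (mmult S F M) F u v"
  assumes S: "finite S" and s_in: "\<And>p. p \<in> S \<Longrightarrow> s p \<in> S" and s_s: "\<And>p. s (s p) = p"
    and \<Sigma>_s: "\<And>p q. p \<in> S \<Longrightarrow> q \<in> S \<Longrightarrow> \<Sigma> (s p) (s q) = \<Sigma> p q"
  shows "expect S \<Sigma> (\<lambda>a b. (1/2) * mmult S Z Z a b)
    = expect S \<Sigma> (mmult S M M) - expect S \<Sigma> (mmult S (mmult S M F) (mmult S M F))"
proof -
  let ?MF2 = "mmult S (mmult S M F) (mmult S M F)"
  note reindex = sum_reindex_involution[OF s_in s_s]
  have Z: "Z q r = M q r - M (s q) (s r)" if "q \<in> S" "r \<in> S" for q r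
    unfolding Z_def F_def using that S s_in s_s by (simp add: mmult_perm_op_left mmult_perm_op_right)
  have MF2: "?MF2 q p = (\<Sum>r\<in>S. M q r * M (s r) (s p))" if "p \<in> S" for q p
    unfolding mmult_def F_def using that S s_in s_s
    by (simp add: mmult_perm_op_right[unfolded mmult_def]
        reindex[of "\<lambda>r. M q r * M (s r) (s p)", symmetric])
  have ZZ: "mmult S Z Z q p = mmult S M M q p - ?MF2 q p - ?MF2 (s q) (s p) + mmult S M M (s q) (s p)"
    if "q \<in> S" "p \<in> S" for q p
  proof -
    have "mmult S Z Z q p = (\<Sum>r\<in>S. (M q r - M (s q) (s r)) * (M r p - M (s r) (s p)))"
      unfolding mmult_def using that by (intro sum.cong refl) (simp add: Z)
    also have "\<dots> = mmult S M M q p - (\<Sum>r\<in>S. M q r * M (s r) (s p))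
        - (\<Sum>r\<in>S. M (s q) (s r) * M r p) + (\<Sum>r\<in>S. M (s q) (s r) * M (s r) (s p))"
      unfolding mmult_def by (simp add: algebra_simps sum_subtractf sum.distrib)
    also have "(\<Sum>r\<in>S. M (s q) (s r) * M r p) = ?MF2 (s q) (s p)"
      using that s_in s_s reindex[of "\<lambda>r. M (s q) (s r) * M r p"] by (simp add: MF2)
    also have "(\<Sum>r\<in>S. M (s q) (s r) * M (s r) (s p)) = mmult S M M (s q) (s p)"
      unfolding mmult_def by (rule reindex)
    finally show ?thesis using that by (simp add: MF2)
  qed
  have "expect S \<Sigma> (\<lambda>a b. (1/2) * mmult S Z Z a b) = (1/2) * (expect S \<Sigma> (mmult S M M)
      - expect S \<Sigma> ?MF2 - expect S \<Sigma> (\<lambda>q p. ?MF2 (s q) (s p))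
      + expect S \<Sigma> (\<lambda>q p. mmult S M M (s q) (s p)))"
    unfolding expect_altdef
    by (simp add: ZZ algebra_simps sum_subtractf sum.distrib sum_distrib_left cong: sum.cong)
  also have "\<dots> = expect S \<Sigma> (mmult S M M) - expect S \<Sigma> ?MF2"
    using s_in s_s \<Sigma>_s by (simp only: expect_conj_involution) (simp add: field_simps)
  finally show ?thesis .
qed

lemma finite_Idx: "finite (Idx d n)"
  unfolding Idx_def by (auto intro: finite_PiE)

lemma Idx_fun_upd:
  assumes "x \<in> Idx e n" "i < n" "a < d i" "\<And>j. j \<noteq> i \<Longrightarrow> e j = d j"
  shows "x(i := a) \<in> Idx d n"
proof -
  have "x \<in> extensional {..<n}" "\<forall>j<n. x j < e j"
    using assms(1) unfolding Idx_def PiE_iff by auto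
  then show ?thesis
    using assms(2-4) unfolding Idx_def PiE_iff by (auto simp: extensional_def)
qed

lemma mtrace_prod_state:
  "mtrace (Idx d n) (prod_state n rho) = (\<Prod>j<n. mtrace {..<d j} (rho j))"
  unfolding mtrace_def prod_state_def Idx_def by (simp add: prod_sum_PiE)

lemma fun_upd_eq_fun_upd_iff: "u i = v i \<Longrightarrow> (u(i := a) = v(i := b)) = (a = b \<and> u = v)"
  by (auto simp: fun_eq_iff)

definition swap_at :: "nat \<Rightarrow> midx \<times> midx \<Rightarrow> midx \<times> midx" where
  "swap_at i = (\<lambda>(x, y). (x(i := y i), y(i := x i)))"

lemma swap_at_swap_at [simp]: "swap_at i (swap_at i p) = p"
  by (cases p) (simp add: swap_at_def)

lemma swap_op_eq_perm_op: "swap_op i = perm_op (swap_at i)"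
  by (auto simp: fun_eq_iff swap_op_def perm_op_def swap_at_def)

locale coordinate_split =
  fixes n :: nat and d :: "nat \<Rightarrow> nat" and rho :: "nat \<Rightarrow> nat op" and i :: nat
  assumes i_less: "i < n"
    and mtrace_rho: "\<And>j. j < n \<Longrightarrow> mtrace {..<d j} (rho j) = 1"
begin

abbreviation "K \<equiv> Idx d n"
abbreviation "\<sigma> \<equiv> prod_state n rho"

definition rest_idx :: "midx set" where
  "rest_idx = Idx (d(i := 1)) n"

definition rest_state :: "midx op" where
  "rest_state u v = (\<Prod>j\<in>{..<n} - {i}. rho j (u j) (v j))"

lemma mtrace_prod_state_eq_1: "mtrace K \<sigma> = 1"
  using mtrace_rho by (simp add: mtrace_prod_state)

lemma rest_idx_coord: "u \<in> rest_idx \<Longrightarrow> u i = 0"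
  using i_less PiE_mem[of u "{..<n}" "\<lambda>j. {..<(d(i := 1)) j}" i]
  unfolding rest_idx_def Idx_def by simp

lemma upd_rest_idx_in_Idx: "u \<in> rest_idx \<Longrightarrow> a < d i \<Longrightarrow> u(i := a) \<in> K"
  unfolding rest_idx_def using Idx_fun_upd[of u "d(i := 1)" n i a d] i_less by simp

lemma upd_zero_in_rest_idx: "x \<in> K \<Longrightarrow> x(i := 0) \<in> rest_idx"
  unfolding rest_idx_def using Idx_fun_upd[of x d n i 0 "d(i := 1)"] i_less by simp

lemma Idx_coord_less: "x \<in> K \<Longrightarrow> x i < d i"
  using i_less PiE_mem[of x "{..<n}" "\<lambda>j. {..<d j}" i] unfolding Idx_def by simp

lemma upd_in_Idx: "x \<in> K \<Longrightarrow> a < d i \<Longrightarrow> x(i := a) \<in> K"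
  using Idx_fun_upd[of x d n i a d] i_less by simp

lemma bij_betw_upd_rest_idx: "bij_betw (\<lambda>(a, u). u(i := a)) ({..<d i} \<times> rest_idx) K"
proof (rule bij_betwI')
  fix p q assume "p \<in> {..<d i} \<times> rest_idx" "q \<in> {..<d i} \<times> rest_idx"
  then show "((case p of (a, u) \<Rightarrow> u(i := a)) = (case q of (a, u) \<Rightarrow> u(i := a))) = (p = q)"
    by (cases p; cases q) (auto simp: fun_upd_eq_fun_upd_iff rest_idx_coord)
next
  fix p assume "p \<in> {..<d i} \<times> rest_idx"
  then show "(case p of (a, u) \<Rightarrow> u(i := a)) \<in> K"
    by (auto simp: upd_rest_idx_in_Idx)
next
  fix x assume "x \<in> K"
  then show "\<exists>p\<in>{..<d i} \<times> rest_idx. x = (case p of (a, u) \<Rightarrow> u(i := a))"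
    by (intro bexI[of _ "(x i, x(i := 0))"]) (simp_all add: Idx_coord_less upd_zero_in_rest_idx)
qed

lemma sum_Idx_split: "(\<Sum>x\<in>K. f x) = (\<Sum>a<d i. \<Sum>u\<in>rest_idx. f (u(i := a)))"
  by (simp add: sum.reindex_bij_betw[OF bij_betw_upd_rest_idx, symmetric]
      sum.cartesian_product case_prod_unfold)

lemma sum_Idx_fiber:
  "a < d i \<Longrightarrow> (\<Sum>x\<in>K. if x i = a then f x else 0) = (\<Sum>u\<in>rest_idx. f (u(i := a)))"
  unfolding sum_Idx_split by (subst sum.swap) (simp add: if_distrib cong: if_cong)

lemma rest_state_upd: "rest_state (x(i := a)) (y(i := b)) = rest_state x y"
  unfolding rest_state_def by (rule prod.cong) auto

lemma prod_state_upd: "\<sigma> (x(i := a)) (y(i := b)) = rho i a b * rest_state x y"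
proof -
  have "\<sigma> (x(i := a)) (y(i := b)) = rho i a b * rest_state (x(i := a)) (y(i := b))"
    unfolding prod_state_def rest_state_def using i_less by (simp add: prod.remove[of "{..<n}" i])
  then show ?thesis by (simp only: rest_state_upd)
qed

lemma mtrace_rest_state: "(\<Sum>u\<in>rest_idx. rest_state u u) = 1"
proof -
  have "1 = mtrace K \<sigma>"
    by (simp add: mtrace_prod_state_eq_1)
  also have "\<dots> = mtrace {..<d i} (rho i) * (\<Sum>u\<in>rest_idx. rest_state u u)"
    unfolding mtrace_def sum_Idx_split prod_state_upd by (simp add: sum_product)
  finally show ?thesis using mtrace_rho[OF i_less] by simp
qed

abbreviation "E \<equiv> cond_exp d rho i"

text \<open>\<open>reduced_op X\<close> is \<open>Tr_i[(rho_i \<otimes> I) X]\<close>, an operator on the factors other than \<open>i\<close>: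
  it ignores the \<open>i\<close>-th entries of its arguments, and \<open>E X = I \<otimes> reduced_op X\<close>.\<close>

definition reduced_op :: "midx op \<Rightarrow> midx op" where
  "reduced_op X x y = (\<Sum>a<d i. \<Sum>c<d i. rho i a c * X (x(i := c)) (y(i := a)))"

lemma cond_exp_eq_reduced_op: "E X x y = (if x i = y i then reduced_op X x y else 0)"
  unfolding cond_exp_def reduced_op_def by simp

lemma reduced_op_upd:
  "reduced_op X (x(i := a)) y = reduced_op X x y" "reduced_op X x (y(i := b)) = reduced_op X x y"
  unfolding reduced_op_def by simp_all

lemma expect_prod_state_split:
  "expect K \<sigma> M = (\<Sum>a<d i. \<Sum>c<d i. rho i a c *
     (\<Sum>u\<in>rest_idx. \<Sum>v\<in>rest_idx. rest_state u v * M (v(i := c)) (u(i := a))))"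
  unfolding expect_altdef sum_Idx_split prod_state_upd
  by (simp add: sum_distrib_left mult.assoc sum.swap[of _ rest_idx "{..<d i}"])

lemma expect_cond_exp: "expect K \<sigma> (E W) = expect K \<sigma> W"
proof -
  define T where "T = (\<Sum>u\<in>rest_idx. \<Sum>v\<in>rest_idx. rest_state u v * reduced_op W v u)"
  have slice: "(\<Sum>u\<in>rest_idx. \<Sum>v\<in>rest_idx. rest_state u v * E W (v(i := c)) (u(i := a)))
      = (if c = a then T else 0)" for a c
    unfolding T_def cond_exp_eq_reduced_op by (cases "c = a") (simp_all add: reduced_op_upd)
  have "expect K \<sigma> (E W) = (\<Sum>a<d i. rho i a a) * T"
    unfolding expect_prod_state_split slice
    by (simp add: if_distrib[where f = "\<lambda>z. _ * z"] sum_distrib_right cong: if_cong)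
  also have "\<dots> = T"
    using mtrace_rho[OF i_less] by (simp add: mtrace_def)
  also have "\<dots> = expect K \<sigma> W"
    unfolding T_def expect_prod_state_split reduced_op_def
    by (simp add: sum_distrib_left mult_ac sum.swap[of _ rest_idx "{..<d i}"])
  finally show ?thesis .
qed

lemma mmult_cond_exp_right:
  "a < d i \<Longrightarrow> mmult K M (E Q) x (y(i := a)) = (\<Sum>w\<in>rest_idx. M x (w(i := a)) * reduced_op Q w y)"
  unfolding mmult_def cond_exp_eq_reduced_op
  by (simp add: if_distrib[where f = "\<lambda>z. _ * z"] sum_Idx_fiber reduced_op_upd cong: if_cong)

lemma mmult_cond_exp_left:
  "c < d i \<Longrightarrow> mmult K (E Q) M (x(i := c)) y = (\<Sum>w\<in>rest_idx. reduced_op Q x w * M (w(i := c)) y)"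
  unfolding mmult_def cond_exp_eq_reduced_op
  by (simp add: if_distrib[where f = "\<lambda>z. z * _"] eq_commute[of c] sum_Idx_fiber reduced_op_upd
      cong: if_cong)

lemma reduced_op_mmult_cond_exp_right:
  "reduced_op (mmult K P (E Q)) x y = (\<Sum>w\<in>rest_idx. reduced_op P x w * reduced_op Q w y)"
proof -
  have "reduced_op (mmult K P (E Q)) x y
      = (\<Sum>a<d i. \<Sum>c<d i. \<Sum>w\<in>rest_idx. rho i a c * P (x(i := c)) (w(i := a)) * reduced_op Q w y)"
    unfolding reduced_op_def[of "mmult K P (E Q)"]
    by (simp add: mmult_cond_exp_right sum_distrib_left mult.assoc)
  also have "\<dots> = (\<Sum>w\<in>rest_idx. (\<Sum>a<d i. \<Sum>c<d i. rho i a c * P (x(i := c)) (w(i := a))) * reduced_op Q w y)"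
    by (simp add: sum_distrib_right sum.swap[of _ "{..<d i}" rest_idx])
  finally show ?thesis by (simp only: reduced_op_def)
qed

lemma reduced_op_mmult_cond_exp_left:
  "reduced_op (mmult K (E Q) P) x y = (\<Sum>w\<in>rest_idx. reduced_op Q x w * reduced_op P w y)"
proof -
  have "reduced_op (mmult K (E Q) P) x y
      = (\<Sum>a<d i. \<Sum>c<d i. \<Sum>w\<in>rest_idx. reduced_op Q x w * (rho i a c * P (w(i := c)) (y(i := a))))"
    unfolding reduced_op_def[of "mmult K (E Q) P"]
    by (simp add: mmult_cond_exp_left sum_distrib_left mult_ac)
  also have "\<dots> = (\<Sum>w\<in>rest_idx. reduced_op Q x w * (\<Sum>a<d i. \<Sum>c<d i. rho i a c * P (w(i := c)) (y(i := a))))"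
    by (simp add: sum_distrib_left sum.swap[of _ "{..<d i}" rest_idx])
  finally show ?thesis by (simp only: reduced_op_def)
qed

lemma mmult_cond_exp_cond_exp:
  "y \<in> K \<Longrightarrow> mmult K (E P) (E Q) x y
     = (if x i = y i then \<Sum>w\<in>rest_idx. reduced_op P x w * reduced_op Q w y else 0)"
  using mmult_cond_exp_right[OF Idx_coord_less, of y "E P" Q x y]
  by (simp add: cond_exp_eq_reduced_op rest_idx_coord reduced_op_upd)

lemma cond_exp_mmult_cond_exp_right:
  "y \<in> K \<Longrightarrow> E (mmult K P (E Q)) x y = mmult K (E P) (E Q) x y"
  by (simp add: cond_exp_eq_reduced_op[of "mmult K P (E Q)"] reduced_op_mmult_cond_exp_right
      mmult_cond_exp_cond_exp)

lemma cond_exp_mmult_cond_exp_left: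
  "y \<in> K \<Longrightarrow> E (mmult K (E Q) P) x y = mmult K (E Q) (E P) x y"
  by (simp add: cond_exp_eq_reduced_op[of "mmult K (E Q) P"] reduced_op_mmult_cond_exp_left
      mmult_cond_exp_cond_exp)

lemma expect_mmult_cond_exp_right: "expect K \<sigma> (mmult K P (E Q)) = expect K \<sigma> (mmult K (E P) (E Q))"
proof -
  have "expect K \<sigma> (E (mmult K P (E Q))) = expect K \<sigma> (mmult K (E P) (E Q))"
    by (rule expect_cong) (rule cond_exp_mmult_cond_exp_right)
  then show ?thesis by (simp only: expect_cond_exp)
qed

lemma expect_mmult_cond_exp_left: "expect K \<sigma> (mmult K (E Q) P) = expect K \<sigma> (mmult K (E Q) (E P))"
proof -
  have "expect K \<sigma> (E (mmult K (E Q) P)) = expect K \<sigma> (mmult K (E Q) (E P))"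
    by (rule expect_cong) (rule cond_exp_mmult_cond_exp_left)
  then show ?thesis by (simp only: expect_cond_exp)
qed

lemma expect_square_diff_op:
  "expect K \<sigma> (mmult K (diff_op d rho i X) (diff_op d rho i X))
     = expect K \<sigma> (mmult K X X) - expect K \<sigma> (mmult K X (E X))"
proof -
  have expand: "mmult K (diff_op d rho i X) (diff_op d rho i X) x y
      = mmult K X X x y - mmult K X (E X) x y - mmult K (E X) X x y + mmult K (E X) (E X) x y" for x y
    unfolding mmult_def diff_op_def by (simp add: algebra_simps sum_subtractf sum.distrib)
  have "expect K \<sigma> (mmult K (diff_op d rho i X) (diff_op d rho i X))
      = expect K \<sigma> (mmult K X X) - expect K \<sigma> (mmult K X (E X))
        - expect K \<sigma> (mmult K (E X) X) + expect K \<sigma> (mmult K (E X) (E X))"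
    unfolding expect_altdef expand by (simp add: algebra_simps sum_subtractf sum.distrib)
  then show ?thesis
    by (simp add: expect_mmult_cond_exp_right[of X X] expect_mmult_cond_exp_left[of X X])
qed

lemma swap_at_in_Idx: "p \<in> K \<times> K \<Longrightarrow> swap_at i p \<in> K \<times> K"
  by (auto simp: swap_at_def upd_in_Idx Idx_coord_less)

lemma tensor_prod_state_swap_at: "tensor_op \<sigma> \<sigma> (swap_at i p) (swap_at i q) = tensor_op \<sigma> \<sigma> p q"
proof -
  have "\<sigma> x y = rho i (x i) (y i) * rest_state x y" for x y
    using prod_state_upd[of x "x i" y "y i"] by simp
  then show ?thesis
    by (cases p; cases q) (simp add: swap_at_def tensor_op_def prod_state_upd rest_state_upd mult_ac)
qed

lemma sum_prod_state_upd:
  "(\<Sum>y\<in>K. \<sigma> y (y(i := c)) * g (y i)) = (\<Sum>b<d i. rho i b c * g b)"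
proof -
  have "(\<Sum>y\<in>K. \<sigma> y (y(i := c)) * g (y i)) = (\<Sum>b<d i. rho i b c * g b * (\<Sum>u\<in>rest_idx. rest_state u u))"
    unfolding sum_Idx_split by (simp add: prod_state_upd sum_distrib_left mult_ac)
  then show ?thesis by (simp add: mtrace_rest_state)
qed

lemma mmult_swap_op_right: "r \<in> K \<times> K \<Longrightarrow> mmult (K \<times> K) M (swap_op i) q r = M q (swap_at i r)"
  unfolding swap_op_eq_perm_op
  by (rule mmult_perm_op_right) (auto simp: finite_Idx swap_at_in_Idx)

lemma mmult_swap_conj_apply:
  assumes "x \<in> K" "y \<in> K"
  shows "mmult (K \<times> K) (mmult (K \<times> K) (tensor_op X id_op) (swap_op i))
      (mmult (K \<times> K) (tensor_op X id_op) (swap_op i)) (x', y') (x, y)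
    = (\<Sum>z\<in>K. if y' = y(i := z i) then X x' (z(i := x i)) * X z (x(i := y i)) else 0)"
proof -
  have "y(i := x i) \<in> K"
    using assms by (simp add: upd_in_Idx Idx_coord_less)
  then show ?thesis
    using assms unfolding mmult_def[of "K \<times> K" "mmult _ _ _"]
    by (simp add: finite_Idx mmult_swap_op_right sum.cartesian_product' swap_at_def tensor_op_def id_op_def
        if_distrib[where f = "\<lambda>u. _ * u"] if_distrib[where f = "\<lambda>u. u * _"] cong: if_cong)
qed

lemma expect_second_copy_swap_conj:
  assumes "x \<in> K" "x' \<in> K"
  shows "expect K \<sigma> (\<lambda>y' y. mmult (K \<times> K) (mmult (K \<times> K) (tensor_op X id_op) (swap_op i))
      (mmult (K \<times> K) (tensor_op X id_op) (swap_op i)) (x', y') (x, y)) = mmult K X (E X) x' x"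
proof -
  have "expect K \<sigma> (\<lambda>y' y. mmult (K \<times> K) (mmult (K \<times> K) (tensor_op X id_op) (swap_op i))
      (mmult (K \<times> K) (tensor_op X id_op) (swap_op i)) (x', y') (x, y))
    = (\<Sum>y\<in>K. \<Sum>y'\<in>K. \<Sum>z\<in>K. \<sigma> y y' *
        (if y' = y(i := z i) then X x' (z(i := x i)) * X z (x(i := y i)) else 0))"
    unfolding expect_altdef using assms(1)
    by (intro sum.cong refl) (simp add: mmult_swap_conj_apply sum_distrib_left)
  also have "\<dots> = (\<Sum>y\<in>K. \<Sum>z\<in>K. \<sigma> y (y(i := z i)) * X x' (z(i := x i)) * X z (x(i := y i)))"
    by (rule sum.cong[OF refl], subst sum.swap)
      (simp add: finite_Idx upd_in_Idx Idx_coord_less mult_ac if_distrib[where f = "\<lambda>u. _ * u"]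
        cong: if_cong)
  also have "\<dots> = (\<Sum>z\<in>K. X x' (z(i := x i)) * (\<Sum>b<d i. rho i b (z i) * X z (x(i := b))))"
    by (subst sum.swap) (simp add: sum_distrib_left mult_ac flip: sum_prod_state_upd)
  also have "\<dots> = (\<Sum>w\<in>rest_idx. X x' (w(i := x i)) * reduced_op X w x)"
    unfolding sum_Idx_split reduced_op_def
    by (simp add: sum_distrib_left mult_ac sum.swap[of _ "{..<d i}" rest_idx] rest_idx_coord)
      (rule sum.swap)
  also have "\<dots> = mmult K X (E X) x' x"
    using mmult_cond_exp_right[OF Idx_coord_less[OF assms(1)], of X X x' x] by simp
  finally show ?thesis .
qed

lemma expect_tensor_square:
  "expect (K \<times> K) (tensor_op \<sigma> \<sigma>) (mmult (K \<times> K) (tensor_op X id_op) (tensor_op X id_op))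
     = expect K \<sigma> (mmult K X X)"
  by (simp add: mmult_tensor_op expect_tensor_op expect_mmult_id_op finite_Idx mtrace_prod_state_eq_1)

lemma expect_tensor_swap_conj:
  "expect (K \<times> K) (tensor_op \<sigma> \<sigma>) (mmult (K \<times> K) (mmult (K \<times> K) (tensor_op X id_op) (swap_op i))
      (mmult (K \<times> K) (tensor_op X id_op) (swap_op i)))
     = expect K \<sigma> (mmult K X (E X))"
  unfolding expect_tensor_op_partial by (rule expect_cong) (simp add: expect_second_copy_swap_conj)

lemma expect_half_square_swap_diff:
  fixes X :: "midx op"
  defines "XI \<equiv> tensor_op X id_op"
  shows "expect (K \<times> K) (tensor_op \<sigma> \<sigma>) (\<lambda>a b. (1/2) * mmult (K \<times> K)
      (\<lambda>u v. XI u v - mmult (K \<times> K) (mmult (K \<times> K) (swap_op i) XI) (swap_op i) u v)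
      (\<lambda>u v. XI u v - mmult (K \<times> K) (mmult (K \<times> K) (swap_op i) XI) (swap_op i) u v) a b)
    = expect K \<sigma> (mmult K X X)
      - expect (K \<times> K) (tensor_op \<sigma> \<sigma>) (mmult (K \<times> K) (mmult (K \<times> K) XI (swap_op i))
          (mmult (K \<times> K) XI (swap_op i)))"
  unfolding swap_op_eq_perm_op XI_def expect_tensor_square[symmetric]
  by (rule expect_half_square_sub_perm_conj)
    (simp_all add: finite_Idx swap_at_in_Idx tensor_prod_state_swap_at)

end

theorem proposition6p5:
  fixes n :: nat and d :: "nat \<Rightarrow> nat" and rho :: "nat \<Rightarrow> nat op"
    and X :: "midx op" and i :: nat
  assumes rho: "\<And>j. j < n \<Longrightarrow> density_on {..<d j} (rho j)"
    and X: "hermitian_on (Idx d n) X"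
    and i: "i < n"
  shows "let K = Idx d n; KK = Idx d n \<times> Idx d n; \<sigma> = prod_state n rho;
             XI = tensor_op X id_op; F = swap_op i; DX = diff_op d rho i X;
             Z = (\<lambda>u v. XI u v - mmult KK (mmult KK F XI) F u v)
         in expect K \<sigma> (mmult K DX DX)
              = expect KK (tensor_op \<sigma> \<sigma>) (\<lambda>a b. (1/2) * mmult KK Z Z a b)
          \<and> expect KK (tensor_op \<sigma> \<sigma>) (\<lambda>a b. (1/2) * mmult KK Z Z a b)
              = expect K \<sigma> (mmult K X X)
                - expect KK (tensor_op \<sigma> \<sigma>) (mmult KK (mmult KK XI F) (mmult KK XI F))"
proof -
  interpret coordinate_split n d rho i
    using rho by unfold_locales (simp_all add: i density_on_def)
  show ?thesis
    unfolding Let_def expect_half_square_swap_diff expect_square_diff_op expect_tensor_swap_conj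
    by simp
qed

end
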